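(* Let $M$ be a normalizing unit-cancellative monoid. (1) $M$ is acyclic. (2) If $M$ is finitely generated, then $M$ is atomic. (3) If $M$ is finitely generated and reduced, then $\mathcal{A}(M)$ is the unique irredundant generating set for $M$, and it is finite.
   Context: $M^\times$ is the group of units of a monoid $M$; $M$ is reduced if $M^\times=\{1\}$. $M$ is normalizing if $aM=Ma$ for all $a\in M$. $M$ is unit-cancellative if $a=ab$ or $a=ba$ implies $b\in M^\times$. $M$ is acyclic if $a=bac$ implies $b,c\in M^\times$. An atom is a non-unit $a$ such that $a=bc$ implies $b\in M^\times$ or $c\in M^\times$; $\mathcal{A}(M)$ is the set of atoms; $M$ is atomic if every non-unit is a product of atoms. A generating set of $M$ is irredundant if no proper subset of it generates $M$ as a monoid. *)

theory Defs
  imports Main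
begin

text \<open>A monoid M is modelled as a type of class monoid_mult (the whole type is M).\<close>

definition is_unit :: "'a::monoid_mult \<Rightarrow> bool" where
  "is_unit a \<longleftrightarrow> (\<exists>b. a * b = 1 \<and> b * a = 1)"

definition reduced_monoid :: "'a::monoid_mult itself \<Rightarrow> bool" where
  "reduced_monoid _ \<longleftrightarrow> (\<forall>a::'a. is_unit a \<longrightarrow> a = 1)"

definition normalizing :: "'a::monoid_mult itself \<Rightarrow> bool" where
  "normalizing _ \<longleftrightarrow> (\<forall>a::'a. range (\<lambda>x. a * x) = range (\<lambda>x. x * a))"

definition unit_cancellative :: "'a::monoid_mult itself \<Rightarrow> bool" where
  "unit_cancellative _ \<longleftrightarrow> (\<forall>a b::'a. (a = a * b \<or> a = b * a) \<longrightarrow> is_unit b)"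

definition acyclic_monoid :: "'a::monoid_mult itself \<Rightarrow> bool" where
  "acyclic_monoid _ \<longleftrightarrow> (\<forall>a b c::'a. a = b * a * c \<longrightarrow> is_unit b \<and> is_unit c)"

definition atom :: "'a::monoid_mult \<Rightarrow> bool" where
  "atom a \<longleftrightarrow> \<not> is_unit a \<and> (\<forall>b c. a = b * c \<longrightarrow> is_unit b \<or> is_unit c)"

definition atoms :: "'a::monoid_mult set" where
  "atoms = {a. atom a}"

definition atomic_monoid :: "'a::monoid_mult itself \<Rightarrow> bool" where
  "atomic_monoid _ \<longleftrightarrow> (\<forall>a::'a. \<not> is_unit a \<longrightarrow>
      (\<exists>xs. xs \<noteq> [] \<and> set xs \<subseteq> atoms \<and> a = prod_list xs))"

definition generating_set :: "'a::monoid_mult set \<Rightarrow> bool" where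
  "generating_set S \<longleftrightarrow> (\<forall>x. \<exists>xs. set xs \<subseteq> S \<and> x = prod_list xs)"

definition finitely_generated :: "'a::monoid_mult itself \<Rightarrow> bool" where
  "finitely_generated _ \<longleftrightarrow> (\<exists>S::'a set. finite S \<and> generating_set S)"

definition irredundant_generating_set :: "'a::monoid_mult set \<Rightarrow> bool" where
  "irredundant_generating_set S \<longleftrightarrow> generating_set S \<and> (\<forall>T. T \<subset> S \<longrightarrow> \<not> generating_set T)"

end

theory Submission
  imports Defs
begin

text \<open>
  In a normalizing monoid, a = b a c can be rewritten as a = a b' c and as a = b c' a, so unit
  cancellativity makes b' c and b c' units; since unit cancellativity also forces a factor of a
  unit to be a unit, b and c are units, i.e. M is acyclic.
  If s is a non-unit of an irredundant generating set T that factors as s = b c into non-units,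
  then writing b and c as words in T, acyclicity forbids s to occur in either word, so s is
  generated by T - {s}, contradicting irredundancy. Hence the non-units of T are atoms, and a
  finite generating set can be shrunk to an irredundant one, which gives atomicity.
  In a reduced monoid an atom is a letter of every word representing it, so the atoms lie in
  every generating set; being themselves generating, they form the only irredundant one.
\<close>

lemma is_unit_one: "is_unit (1::'a::monoid_mult)"
  unfolding is_unit_def by auto

lemma is_unitE:
  assumes "is_unit (u::'a::monoid_mult)"
  obtains v where "is_unit v" "u * v = 1" "v * u = 1"
  using assms unfolding is_unit_def by blast

lemma is_unit_mult:
  assumes "is_unit (u::'a::monoid_mult)" "is_unit v"
  shows "is_unit (u * v)"
proof -
  obtain u' where "u * u' = 1" "u' * u = 1" using assms(1) by (meson is_unitE)
  moreover obtain v' where "v * v' = 1" "v' * v = 1" using assms(2) by (meson is_unitE)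
  ultimately have "(u * v) * (v' * u') = 1" "(v' * u') * (u * v) = 1"
    by (metis mult.assoc mult.right_neutral)+
  then show ?thesis unfolding is_unit_def by blast
qed

lemma unit_cancellative_right_inverse_imp_left_inverse:
  assumes "unit_cancellative TYPE('a::monoid_mult)" and "(x::'a) * y = 1"
  shows "y * x = 1"
proof -
  have idem: "y * x = (y * x) * (y * x)"
    by (metis assms(2) mult.assoc mult.right_neutral)
  then have "is_unit (y * x)" using assms(1) unfolding unit_cancellative_def by blast
  then obtain e where e: "(y * x) * e = 1" by (meson is_unitE)
  have "y * x = (y * x) * ((y * x) * e)" using e by simp
  also have "\<dots> = 1" using idem e by (metis mult.assoc)
  finally show ?thesis .
qed

lemma unit_cancellative_is_unit_mult_iff:
  assumes "unit_cancellative TYPE('a::monoid_mult)"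
  shows "is_unit ((x::'a) * y) \<longleftrightarrow> is_unit x \<and> is_unit y"
proof
  assume "is_unit (x * y)"
  then obtain w where "x * y * w = 1" "w * (x * y) = 1" by (auto elim: is_unitE)
  then have right: "x * (y * w) = 1" and left: "(w * x) * y = 1" by (simp_all add: mult.assoc)
  show "is_unit x \<and> is_unit y"
    unfolding is_unit_def
    using right left unit_cancellative_right_inverse_imp_left_inverse[OF assms] by blast
qed (simp add: is_unit_mult)

lemma normalizing_mult_left_commute:
  assumes "normalizing TYPE('a::monoid_mult)"
  obtains y where "(x::'a) * a = a * y"
proof -
  have "x * a \<in> range (\<lambda>z. a * z)"
    using assms unfolding normalizing_def by (metis rangeI)
  then show ?thesis using that by blast
qed

lemma normalizing_mult_right_commute:
  assumes "normalizing TYPE('a::monoid_mult)"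
  obtains y where "(a::'a) * x = y * a"
proof -
  have "a * x \<in> range (\<lambda>z. z * a)"
    using assms unfolding normalizing_def by (metis rangeI)
  then show ?thesis using that by blast
qed

lemma normalizing_unit_cancellative_imp_acyclic:
  assumes norm: "normalizing TYPE('a::monoid_mult)" and uc: "unit_cancellative TYPE('a)"
  shows "acyclic_monoid TYPE('a)"
  unfolding acyclic_monoid_def
proof (intro allI impI)
  fix a b c :: 'a
  assume a: "a = b * a * c"
  obtain b' where "b * a = a * b'" using normalizing_mult_left_commute[OF norm] .
  then have "a = a * (b' * c)" using a by (simp add: mult.assoc)
  then have "is_unit (b' * c)" using uc unfolding unit_cancellative_def by blast
  then have "is_unit c" using unit_cancellative_is_unit_mult_iff[OF uc] by blast
  obtain c' where "a * c = c' * a" using normalizing_mult_right_commute[OF norm] .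
  then have "a = (b * c') * a" using a by (simp add: mult.assoc)
  then have "is_unit (b * c')" using uc unfolding unit_cancellative_def by blast
  then have "is_unit b" using unit_cancellative_is_unit_mult_iff[OF uc] by blast
  with \<open>is_unit c\<close> show "is_unit b \<and> is_unit c" by blast
qed

lemma acyclic_letter_of_word_imp_units:
  assumes ac: "acyclic_monoid TYPE('a::monoid_mult)" and uc: "unit_cancellative TYPE('a)"
    and s: "s = u * prod_list ws * v" and mem: "(s::'a) \<in> set ws"
  shows "is_unit u \<and> is_unit v"
proof -
  obtain p q where "ws = p @ s # q" using mem by (meson split_list)
  then have ws: "prod_list ws = prod_list p * s * prod_list q" by (simp add: mult.assoc)
  have "s = (u * prod_list p) * s * (prod_list q * v)"
    using s by (simp only: ws mult.assoc)
  then have "is_unit (u * prod_list p) \<and> is_unit (prod_list q * v)"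
    using ac unfolding acyclic_monoid_def by blast
  then show ?thesis using unit_cancellative_is_unit_mult_iff[OF uc] by blast
qed

lemma unit_mult_atom:
  assumes "is_unit (u::'a::monoid_mult)" "atom a"
  shows "atom (u * a)"
proof -
  obtain v where v: "is_unit v" "u * v = 1" "v * u = 1" using assms(1) by (meson is_unitE)
  have "\<not> is_unit (u * a)"
  proof
    assume "is_unit (u * a)"
    then have "is_unit (v * (u * a))" using is_unit_mult v(1) by blast
    then show False using assms(2) v(3) unfolding atom_def by (simp add: mult.assoc[symmetric])
  qed
  moreover have "is_unit b \<or> is_unit c" if "u * a = b * c" for b c
  proof -
    have "a = (v * b) * c" using that v(3) by (metis mult.assoc mult_1_left)
    then have "is_unit (v * b) \<or> is_unit c" using assms(2) unfolding atom_def by blast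
    moreover have "b = u * (v * b)" using v(2) by (simp add: mult.assoc[symmetric])
    ultimately show ?thesis using assms(1) is_unit_mult by metis
  qed
  ultimately show ?thesis unfolding atom_def by blast
qed

lemma atom_mult_unit:
  assumes "is_unit (u::'a::monoid_mult)" "atom a"
  shows "atom (a * u)"
proof -
  obtain v where v: "is_unit v" "u * v = 1" "v * u = 1" using assms(1) by (meson is_unitE)
  have "\<not> is_unit (a * u)"
  proof
    assume "is_unit (a * u)"
    then have "is_unit ((a * u) * v)" using is_unit_mult v(1) by blast
    then show False using assms(2) v(2) unfolding atom_def by (simp add: mult.assoc)
  qed
  moreover have "is_unit b \<or> is_unit c" if "a * u = b * c" for b c
  proof -
    have "a = b * (c * v)" using that v(2) by (metis mult.assoc mult_1_right)
    then have "is_unit b \<or> is_unit (c * v)" using assms(2) unfolding atom_def by blast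
    moreover have "c = (c * v) * u" using v(3) by (simp add: mult.assoc)
    ultimately show ?thesis using assms(1) is_unit_mult by metis
  qed
  ultimately show ?thesis unfolding atom_def by blast
qed

lemma prod_list_units_and_atoms:
  assumes "\<forall>x\<in>set xs. is_unit x \<or> atom (x::'a::monoid_mult)"
  shows "is_unit (prod_list xs) \<or> (\<exists>ys. ys \<noteq> [] \<and> set ys \<subseteq> atoms \<and> prod_list xs = prod_list ys)"
  using assms
proof (induction xs)
  case Nil
  then show ?case by (simp add: is_unit_one)
next
  case (Cons x xs)
  then have x: "is_unit x \<or> atom x" by simp
  from Cons have "is_unit (prod_list xs) \<or>
      (\<exists>ys. ys \<noteq> [] \<and> set ys \<subseteq> atoms \<and> prod_list xs = prod_list ys)"
    by simp
  then show ?case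
  proof
    assume xs: "is_unit (prod_list xs)"
    show ?thesis
    proof (cases "is_unit x")
      case True
      then show ?thesis using xs by (simp add: is_unit_mult)
    next
      case False
      then have "atom (x * prod_list xs)" using x xs atom_mult_unit by blast
      then show ?thesis by (intro disjI2 exI[of _ "[x * prod_list xs]"]) (simp add: atoms_def)
    qed
  next
    assume "\<exists>ys. ys \<noteq> [] \<and> set ys \<subseteq> atoms \<and> prod_list xs = prod_list ys"
    then obtain y ys where ys: "set (y # ys) \<subseteq> atoms" "prod_list xs = prod_list (y # ys)"
      by (metis neq_Nil_conv)
    show ?thesis
    proof (cases "is_unit x")
      case True
      then have "atom (x * y)" using ys(1) by (simp add: unit_mult_atom atoms_def)
      then show ?thesis using ys
        by (intro disjI2 exI[of _ "(x * y) # ys"]) (simp add: atoms_def mult.assoc)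
    next
      case False
      then have "atom x" using x by blast
      then show ?thesis using ys
        by (intro disjI2 exI[of _ "x # y # ys"]) (simp add: atoms_def)
    qed
  qed
qed

lemma atomic_if_generated_by_units_and_atoms:
  assumes "generating_set (T::'a::monoid_mult set)" and "\<forall>x\<in>T. is_unit x \<or> atom x"
  shows "atomic_monoid TYPE('a)"
  unfolding atomic_monoid_def
proof (intro allI impI)
  fix a :: 'a
  assume "\<not> is_unit a"
  moreover obtain xs where "set xs \<subseteq> T" "a = prod_list xs"
    using assms(1) unfolding generating_set_def by blast
  ultimately show "\<exists>xs. xs \<noteq> [] \<and> set xs \<subseteq> atoms \<and> a = prod_list xs"
    using prod_list_units_and_atoms[of xs] assms(2) by auto
qed

definition generated_submonoid :: "'a::monoid_mult set \<Rightarrow> 'a set" where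
  "generated_submonoid S = {prod_list xs |xs. set xs \<subseteq> S}"

lemma generating_set_iff_generated_submonoid_UNIV:
  "generating_set S \<longleftrightarrow> generated_submonoid S = UNIV"
  unfolding generating_set_def generated_submonoid_def by blast

lemma prod_list_in_generated_submonoid:
  "set xs \<subseteq> generated_submonoid S \<Longrightarrow> prod_list xs \<in> generated_submonoid S"
proof (induction xs)
  case Nil
  then show ?case unfolding generated_submonoid_def by (auto intro!: exI[of _ "[]"])
next
  case (Cons x xs)
  then obtain ys zs where "set ys \<subseteq> S" "x = prod_list ys" "set zs \<subseteq> S" "prod_list xs = prod_list zs"
    unfolding generated_submonoid_def by auto
  then show ?case unfolding generated_submonoid_def by (auto intro!: exI[of _ "ys @ zs"])
qed

lemma generated_submonoid_subset:
  assumes "T \<subseteq> generated_submonoid S"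
  shows "generated_submonoid T \<subseteq> generated_submonoid S"
  using assms prod_list_in_generated_submonoid unfolding generated_submonoid_def[of T] by blast

lemma generating_set_Diff_singleton:
  assumes "generating_set T" and "s \<in> generated_submonoid (T - {s})"
  shows "generating_set (T - {s})"
proof -
  have "T \<subseteq> generated_submonoid (T - {s})"
  proof
    fix t
    assume "t \<in> T"
    show "t \<in> generated_submonoid (T - {s})"
    proof (cases "t = s")
      case False
      with \<open>t \<in> T\<close> show ?thesis
        unfolding generated_submonoid_def by (intro CollectI exI[of _ "[t]"]) simp
    qed (use assms(2) in simp)
  qed
  then show ?thesis
    using assms(1) generated_submonoid_subset
    unfolding generating_set_iff_generated_submonoid_UNIV by blast
qed

lemma irredundant_generating_set_non_unit_imp_atom:
  assumes ac: "acyclic_monoid TYPE('a::monoid_mult)" and uc: "unit_cancellative TYPE('a)"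
    and T: "irredundant_generating_set T" and s: "s \<in> T" "\<not> is_unit (s::'a)"
  shows "atom s"
proof (rule ccontr)
  assume "\<not> atom s"
  then obtain b c where bc: "s = b * c" "\<not> is_unit b" "\<not> is_unit c"
    using s(2) unfolding atom_def by blast
  have gen: "generating_set T" using T unfolding irredundant_generating_set_def by blast
  then obtain xs ys where xs: "set xs \<subseteq> T" "b = prod_list xs" and ys: "set ys \<subseteq> T" "c = prod_list ys"
    unfolding generating_set_def by metis
  have "s \<notin> set xs"
    using acyclic_letter_of_word_imp_units[OF ac uc, of s 1 xs c] bc xs(2) by auto
  moreover have "s \<notin> set ys"
    using acyclic_letter_of_word_imp_units[OF ac uc, of s b ys 1] bc ys(2) by auto
  ultimately have "s \<in> generated_submonoid (T - {s})"
    using xs ys bc(1) unfolding generated_submonoid_def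
    by (auto intro!: exI[of _ "xs @ ys"])
  then have "generating_set (T - {s})" using generating_set_Diff_singleton[OF gen] by blast
  moreover have "T - {s} \<subset> T" using s(1) by blast
  ultimately show False using T unfolding irredundant_generating_set_def by blast
qed

lemma finite_generating_set_contains_irredundant:
  assumes "finite S" "generating_set S"
  shows "\<exists>T \<subseteq> S. irredundant_generating_set T"
  using assms
proof (induction rule: finite_psubset_induct)
  case (psubset S)
  show ?case
  proof (cases "irredundant_generating_set S")
    case False
    then obtain T where "T \<subset> S" "generating_set T"
      using psubset.prems unfolding irredundant_generating_set_def by blast
    then show ?thesis using psubset.IH by (meson order.trans psubset_imp_subset)
  qed blast
qed

lemma finitely_generated_imp_atomic:
  assumes ac: "acyclic_monoid TYPE('a::monoid_mult)" and uc: "unit_cancellative TYPE('a)"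
    and "finitely_generated TYPE('a)"
  shows "atomic_monoid TYPE('a)"
proof -
  obtain S :: "'a set" where "finite S" "generating_set S"
    using assms(3) unfolding finitely_generated_def by blast
  then obtain T :: "'a set" where T: "irredundant_generating_set T"
    using finite_generating_set_contains_irredundant by blast
  have "generating_set T" using T unfolding irredundant_generating_set_def by blast
  moreover have "\<forall>x\<in>T. is_unit x \<or> atom x"
    using irredundant_generating_set_non_unit_imp_atom[OF ac uc T] by blast
  ultimately show ?thesis by (rule atomic_if_generated_by_units_and_atoms)
qed

lemma reduced_atom_mem_word:
  assumes "reduced_monoid TYPE('a::monoid_mult)" and "atom (a::'a)"
  shows "a = prod_list xs \<Longrightarrow> a \<in> set xs"
proof (induction xs)
  case Nil
  then show ?case using assms(2) by (simp add: atom_def is_unit_one)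
next
  case (Cons x xs)
  then have "is_unit x \<or> is_unit (prod_list xs)" using assms(2) unfolding atom_def by simp
  then have "x = 1 \<or> prod_list xs = 1" using assms(1) unfolding reduced_monoid_def by blast
  then show ?case using Cons by auto
qed

lemma reduced_atoms_subset_generating_set:
  assumes "reduced_monoid TYPE('a::monoid_mult)" and "generating_set (S::'a set)"
  shows "atoms \<subseteq> S"
  using assms reduced_atom_mem_word unfolding generating_set_def atoms_def by blast

lemma reduced_atomic_imp_generating_set_atoms:
  assumes "reduced_monoid TYPE('a::monoid_mult)" and "atomic_monoid TYPE('a)"
  shows "generating_set (atoms :: 'a set)"
  unfolding generating_set_def
proof
  fix x :: 'a
  show "\<exists>xs. set xs \<subseteq> atoms \<and> x = prod_list xs"
  proof (cases "is_unit x")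
    case True
    then have "x = 1" using assms(1) unfolding reduced_monoid_def by blast
    then show ?thesis by (intro exI[of _ "[]"]) simp
  qed (use assms(2) in \<open>auto simp: atomic_monoid_def\<close>)
qed

lemma irredundant_generating_set_iff_eq_least:
  assumes "generating_set G" and "\<forall>S. generating_set S \<longrightarrow> G \<subseteq> S"
  shows "irredundant_generating_set S \<longleftrightarrow> S = G"
  using assms unfolding irredundant_generating_set_def by blast

theorem proposition5p6:
  assumes "normalizing TYPE('a::monoid_mult)"
    and "unit_cancellative TYPE('a)"
  shows "acyclic_monoid TYPE('a) \<and>
         (finitely_generated TYPE('a) \<longrightarrow> atomic_monoid TYPE('a)) \<and>
         (finitely_generated TYPE('a) \<and> reduced_monoid TYPE('a) \<longrightarrow>
           irredundant_generating_set (atoms :: 'a set) \<and>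
           (\<forall>S::'a set. irredundant_generating_set S \<longrightarrow> S = atoms) \<and>
           finite (atoms :: 'a set))"
proof -
  have ac: "acyclic_monoid TYPE('a)"
    using assms by (rule normalizing_unit_cancellative_imp_acyclic)
  have atomic: "atomic_monoid TYPE('a)" if "finitely_generated TYPE('a)"
    using ac assms(2) that by (rule finitely_generated_imp_atomic)
  moreover have "irredundant_generating_set S \<longleftrightarrow> S = atoms" "finite (atoms :: 'a set)"
    if "finitely_generated TYPE('a)" and red: "reduced_monoid TYPE('a)" for S :: "'a set"
  proof -
    have "generating_set (atoms :: 'a set)"
      using reduced_atomic_imp_generating_set_atoms[OF red atomic[OF that(1)]] .
    then show "irredundant_generating_set S \<longleftrightarrow> S = atoms"
      using irredundant_generating_set_iff_eq_least reduced_atoms_subset_generating_set[OF red] by blast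
    show "finite (atoms :: 'a set)"
      using that(1) reduced_atoms_subset_generating_set[OF red] finite_subset
      unfolding finitely_generated_def by blast
  qed
  ultimately show ?thesis using ac by blast
qed

end
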